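(* Let $R$ be the ring of integers of a nonarchimedean local field $F$ of characteristic not $2$ in which $2$ is a prime element of $R$. For every positive integer $n$, the minimal rank of an even $R$-lattice that primitively represents all even $R$-lattices of rank $n$ is exactly $2n$.
   Context: An $R$-lattice is a finitely generated $R$-submodule $L$ of a quadratic space $(V,B)$ over $F$ with $Q(v)=B(v,v)$, assumed integral ($B(L,L)\subseteq R$) and nondegenerate. $L$ is even if $Q(L)\subseteq 2R$. A representation of $L$ into $M$ is an $R$-linear map preserving $B$; it is primitive if its image is a direct summand of $M$. *)

theory Defs
  imports Main
begin

text \<open>A normalized discrete valuation on a field: defined on nonzero elements
(the value at 0 is irrelevant and never used).\<close>
definition discrete_valuation :: "('a::field \<Rightarrow> int) \<Rightarrow> bool" where
  "discrete_valuation v \<longleftrightarrow>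
     (\<forall>x y. x \<noteq> 0 \<longrightarrow> y \<noteq> 0 \<longrightarrow> v (x * y) = v x + v y) \<and>
     (\<forall>x y. x \<noteq> 0 \<longrightarrow> y \<noteq> 0 \<longrightarrow> x + y \<noteq> 0 \<longrightarrow> v (x + y) \<ge> min (v x) (v y)) \<and>
     (\<forall>k. \<exists>x. x \<noteq> 0 \<and> v x = k)"

definition int_ring :: "('a::field \<Rightarrow> int) \<Rightarrow> 'a set" where
  "int_ring v = {x. x = 0 \<or> v x \<ge> 0}"

definition vclose :: "('a::field \<Rightarrow> int) \<Rightarrow> int \<Rightarrow> 'a \<Rightarrow> 'a \<Rightarrow> bool" where
  "vclose v N x y \<longleftrightarrow> x = y \<or> v (x - y) \<ge> N"

definition vcomplete :: "('a::field \<Rightarrow> int) \<Rightarrow> bool" where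
  "vcomplete v \<longleftrightarrow>
     (\<forall>a :: nat \<Rightarrow> 'a.
        (\<forall>N. \<exists>K. \<forall>i\<ge>K. \<forall>j\<ge>K. vclose v N (a i) (a j)) \<longrightarrow>
        (\<exists>l. \<forall>N. \<exists>K. \<forall>i\<ge>K. vclose v N (a i) l))"

definition finite_residue_field :: "('a::field \<Rightarrow> int) \<Rightarrow> bool" where
  "finite_residue_field v \<longleftrightarrow>
     (\<exists>S. finite S \<and> S \<subseteq> int_ring v \<and> (\<forall>x\<in>int_ring v. \<exists>s\<in>S. vclose v 1 x s))"

definition nonarch_local_field :: "('a::field \<Rightarrow> int) \<Rightarrow> bool" where
  "nonarch_local_field v \<longleftrightarrow> discrete_valuation v \<and> vcomplete v \<and> finite_residue_field v"

definition dvd_in :: "'a::field set \<Rightarrow> 'a \<Rightarrow> 'a \<Rightarrow> bool" where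
  "dvd_in R a b \<longleftrightarrow> (\<exists>c\<in>R. b = a * c)"

definition prime_elem_in :: "'a::field set \<Rightarrow> 'a \<Rightarrow> bool" where
  "prime_elem_in R p \<longleftrightarrow> p \<in> R \<and> p \<noteq> 0 \<and> \<not> dvd_in R p 1 \<and>
     (\<forall>a\<in>R. \<forall>b\<in>R. dvd_in R p (a * b) \<longrightarrow> dvd_in R p a \<or> dvd_in R p b)"

definition Rmod :: "'a::field set \<Rightarrow> nat \<Rightarrow> (nat \<Rightarrow> 'a) set" where
  "Rmod R m = {x. (\<forall>i. x i \<in> R) \<and> (\<forall>i\<ge>m. x i = 0)}"

definition bform :: "nat \<Rightarrow> (nat \<Rightarrow> nat \<Rightarrow> 'a::field) \<Rightarrow> (nat \<Rightarrow> 'a) \<Rightarrow> (nat \<Rightarrow> 'a) \<Rightarrow> 'a" where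
  "bform m G x y = (\<Sum>i<m. \<Sum>j<m. x i * G i j * y j)"

definition is_lattice :: "('a::field \<Rightarrow> int) \<Rightarrow> nat \<Rightarrow> (nat \<Rightarrow> nat \<Rightarrow> 'a) \<Rightarrow> bool" where
  "is_lattice v m G \<longleftrightarrow>
     (\<forall>i<m. \<forall>j<m. G i j = G j i) \<and>
     (\<forall>x\<in>Rmod (int_ring v) m. \<forall>y\<in>Rmod (int_ring v) m. bform m G x y \<in> int_ring v) \<and>
     (\<forall>x\<in>Rmod (int_ring v) m. (\<forall>y\<in>Rmod (int_ring v) m. bform m G x y = 0) \<longrightarrow> x = (\<lambda>_. 0))"

definition even_lattice :: "('a::field \<Rightarrow> int) \<Rightarrow> nat \<Rightarrow> (nat \<Rightarrow> nat \<Rightarrow> 'a) \<Rightarrow> bool" where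
  "even_lattice v m G \<longleftrightarrow> is_lattice v m G \<and>
     (\<forall>x\<in>Rmod (int_ring v) m. \<exists>r\<in>int_ring v. bform m G x x = 2 * r)"

definition submodule_of :: "'a::field set \<Rightarrow> (nat \<Rightarrow> 'a) set \<Rightarrow> (nat \<Rightarrow> 'a) set \<Rightarrow> bool" where
  "submodule_of R N M \<longleftrightarrow> N \<subseteq> M \<and> (\<lambda>_. 0) \<in> N \<and>
     (\<forall>x\<in>N. \<forall>y\<in>N. (\<lambda>i. x i + y i) \<in> N) \<and> (\<forall>r\<in>R. \<forall>x\<in>N. (\<lambda>i. r * x i) \<in> N)"

definition direct_summand :: "'a::field set \<Rightarrow> (nat \<Rightarrow> 'a) set \<Rightarrow> (nat \<Rightarrow> 'a) set \<Rightarrow> bool" where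
  "direct_summand R S M \<longleftrightarrow> (\<exists>N. submodule_of R N M \<and>
     (\<forall>z\<in>M. \<exists>u\<in>S. \<exists>w\<in>N. z = (\<lambda>i. u i + w i)) \<and> S \<inter> N = {\<lambda>_. 0})"

definition representation ::
  "('a::field \<Rightarrow> int) \<Rightarrow> nat \<Rightarrow> (nat \<Rightarrow> nat \<Rightarrow> 'a) \<Rightarrow> nat \<Rightarrow> (nat \<Rightarrow> nat \<Rightarrow> 'a)
     \<Rightarrow> ((nat \<Rightarrow> 'a) \<Rightarrow> (nat \<Rightarrow> 'a)) \<Rightarrow> bool" where
  "representation v n A m G \<sigma> \<longleftrightarrow>
     \<sigma> ` Rmod (int_ring v) n \<subseteq> Rmod (int_ring v) m \<and>
     (\<forall>x\<in>Rmod (int_ring v) n. \<forall>y\<in>Rmod (int_ring v) n. \<sigma> (\<lambda>i. x i + y i) = (\<lambda>i. \<sigma> x i + \<sigma> y i)) \<and>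
     (\<forall>r\<in>int_ring v. \<forall>x\<in>Rmod (int_ring v) n. \<sigma> (\<lambda>i. r * x i) = (\<lambda>i. r * \<sigma> x i)) \<and>
     (\<forall>x\<in>Rmod (int_ring v) n. \<forall>y\<in>Rmod (int_ring v) n. bform m G (\<sigma> x) (\<sigma> y) = bform n A x y)"

definition prim_represents ::
  "('a::field \<Rightarrow> int) \<Rightarrow> nat \<Rightarrow> (nat \<Rightarrow> nat \<Rightarrow> 'a) \<Rightarrow> nat \<Rightarrow> (nat \<Rightarrow> nat \<Rightarrow> 'a) \<Rightarrow> bool" where
  "prim_represents v n A m G \<longleftrightarrow> (\<exists>\<sigma>. representation v n A m G \<sigma> \<and>
     direct_summand (int_ring v) (\<sigma> ` Rmod (int_ring v) n) (Rmod (int_ring v) m))"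

definition prim_universal_even :: "('a::field \<Rightarrow> int) \<Rightarrow> nat \<Rightarrow> nat \<Rightarrow> (nat \<Rightarrow> nat \<Rightarrow> 'a) \<Rightarrow> bool" where
  "prim_universal_even v n m G \<longleftrightarrow>
     (\<forall>A. even_lattice v n A \<longrightarrow> prim_represents v n A m G)"

end

theory Submission
  imports "Jordan_Normal_Form.Determinant" Defs
begin

text \<open>
  Upper bound: an even Gram matrix splits as A = U + U^T with U upper triangular, carrying half
  the diagonal of A (integral because A is even); then x \<mapsto> (x, U^T x) primitively represents A
  in the hyperbolic space of rank 2n.

  Lower bound: let a lattice of rank m primitively represent c I_n, where c = 2 p^(d+1) for a
  uniformizer p and p^d clears the denominators of the dual basis of the lattice. Primitivity gives
  integral functionals dual to the images s_i of the standard basis, and the dual basis turns them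
  into vectors w_j with B(s_i, w_j) = \<delta>_ij and p^d B(w_i, w_j) integral. The Gram matrix of
  s_1, ..., s_n, w_1, ..., w_n is [[c I, I], [I, \<beta>]] with c \<beta> \<equiv> 0 modulo p, which is
  nonsingular, so m \<ge> 2n.
\<close>

section \<open>Coordinate vectors and bilinear forms\<close>

lemma homogeneous_system_nontrivial_solution:
  fixes u :: "nat \<Rightarrow> nat \<Rightarrow> 'a::field"
  assumes "m < k"
  shows "\<exists>a. (\<exists>j<k. a j \<noteq> 0) \<and> (\<forall>i<m. (\<Sum>j<k. u i j * a j) = 0)"
proof -
  define A where "A = mat k k (\<lambda>(i, j). if i < m then u i j else 0)"
  have A: "A \<in> carrier_mat k k" by (simp add: A_def)
  have "det A = 0"
    unfolding det_def using A
  proof (simp, intro sum.neutral ballI)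
    fix p assume "p \<in> {p. p permutes {0..<k}}"
    then have "p (k - 1) < k" using assms by (auto dest: permutes_in_image)
    then show "of_int (sign p) * (\<Prod>i = 0..<k. A $$ (i, p i)) = 0"
      using assms
      by (intro mult_eq_0_iff[THEN iffD2] disjI2 prod_zero bexI[of _ "k - 1"]) (auto simp: A_def)
  qed
  then obtain x where x: "x \<in> carrier_vec k" "x \<noteq> 0\<^sub>v k" "A *\<^sub>v x = 0\<^sub>v k"
    using det_0_iff_vec_prod_zero_field[OF A] by blast
  show ?thesis
  proof (intro exI[of _ "\<lambda>j. x $ j"] conjI allI impI)
    show "\<exists>j<k. x $ j \<noteq> 0" using x(1,2) by (auto simp: vec_eq_iff)
    fix i assume "i < m"
    then have "(A *\<^sub>v x) $ i = (\<Sum>j<k. u i j * x $ j)"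
      using assms x(1) by (auto simp: A_def scalar_prod_def atLeast0LessThan intro!: sum.cong)
    then show "(\<Sum>j<k. u i j * x $ j) = 0" using x(3) \<open>i < m\<close> assms by simp
  qed
qed

definition std_basis :: "nat \<Rightarrow> nat \<Rightarrow> 'a::field" where
  "std_basis k = (\<lambda>t. if t = k then 1 else 0)"

lemma sum_std_basis_left [simp]: "k < m \<Longrightarrow> (\<Sum>i<m. std_basis k i * f i) = f k"
  by (simp add: std_basis_def if_distrib[of "\<lambda>c. c * _"] cong: if_cong)

lemma sum_std_basis_right [simp]: "k < m \<Longrightarrow> (\<Sum>i<m. f i * std_basis k i) = f k"
  by (simp add: std_basis_def mult.commute[of "f _"] if_distrib cong: if_cong)

lemma std_basis_expansion:
  assumes "\<And>i. m \<le> i \<Longrightarrow> z i = 0"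
  shows "(\<Sum>l<m. z l * std_basis l i) = z i"
  using assms by (cases "i < m") (auto simp: std_basis_def if_distrib cong: if_cong)

lemma sum_lessThan_double: "(\<Sum>i<2 * n. f i) = (\<Sum>i<n. f i) + (\<Sum>i<n. f (i + n))"
  for n :: nat
proof -
  have "(\<Sum>i<2 * n. f i) = (\<Sum>i\<in>{..<n} \<union> {n..<n + n}. f i)"
    by (rule sum.cong) auto
  also have "\<dots> = (\<Sum>i<n. f i) + (\<Sum>i\<in>{n..<n + n}. f i)"
    by (rule sum.union_disjoint) auto
  also have "(\<Sum>i\<in>{n..<n + n}. f i) = (\<Sum>i<n. f (i + n))"
    using sum.shift_bounds_nat_ivl[of f 0 n n] by (simp add: atLeast0LessThan)
  finally show ?thesis .
qed

lemma bform_eq_sum_right: "bform m G x y = (\<Sum>i<m. x i * (\<Sum>j<m. G i j * y j))"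
  unfolding bform_def by (simp add: sum_distrib_left mult.assoc)

lemma bform_eq_sum_left: "bform m G x y = (\<Sum>j<m. (\<Sum>i<m. x i * G i j) * y j)"
  unfolding bform_def by (subst sum.swap) (simp add: sum_distrib_right)

lemma bform_std_basis: "i < m \<Longrightarrow> j < m \<Longrightarrow> bform m G (std_basis i) (std_basis j) = G i j"
  by (simp add: bform_eq_sum_right)

lemma bform_cong:
  "(\<And>t. t < m \<Longrightarrow> x t = x' t) \<Longrightarrow> (\<And>t. t < m \<Longrightarrow> y t = y' t) \<Longrightarrow>
   bform m G x y = bform m G x' y'"
  unfolding bform_def by (intro sum.cong) auto

lemma bform_zero_left [simp]: "bform m G (\<lambda>_. 0) y = 0"
  and bform_zero_right [simp]: "bform m G x (\<lambda>_. 0) = 0"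
  by (simp_all add: bform_def)

lemma bform_sum_left:
  "bform m G (\<lambda>t. \<Sum>k\<in>K. a k * x k t) y = (\<Sum>k\<in>K. a k * bform m G (x k) y)"
  unfolding bform_def sum_distrib_left sum_distrib_right
  by (subst sum.swap, rule sum.cong, simp, subst sum.swap, rule sum.cong, simp, rule sum.cong,
      simp_all add: mult_ac)

lemma bform_sum_right:
  "bform m G x (\<lambda>t. \<Sum>k\<in>K. a k * y k t) = (\<Sum>k\<in>K. a k * bform m G x (y k))"
  unfolding bform_def sum_distrib_left
  by (subst sum.swap, rule sum.cong, simp, subst sum.swap, rule sum.cong, simp, rule sum.cong,
      simp_all add: mult_ac)

lemma submodule_lincomb:
  assumes N: "submodule_of R N M" and "finite L"
    and "\<And>l. l \<in> L \<Longrightarrow> r l \<in> R" and "\<And>l. l \<in> L \<Longrightarrow> z l \<in> N"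
  shows "(\<lambda>i. \<Sum>l\<in>L. r l * z l i) \<in> N"
  using assms(2-4)
proof (induction L rule: finite_induct)
  case empty
  then show ?case using N by (simp add: submodule_of_def)
next
  case (insert l L)
  have "(\<lambda>i. r l * z l i) \<in> N" using N insert.prems by (simp add: submodule_of_def)
  moreover have "(\<lambda>i. \<Sum>l\<in>L. r l * z l i) \<in> N" using insert by simp
  ultimately show ?case using N insert.hyps unfolding submodule_of_def by simp
qed

lemma representationD:
  assumes "representation v n A m G \<sigma>"
  shows representation_in_Rmod: "x \<in> Rmod (int_ring v) n \<Longrightarrow> \<sigma> x \<in> Rmod (int_ring v) m"
    and representation_add: "x \<in> Rmod (int_ring v) n \<Longrightarrow> y \<in> Rmod (int_ring v) n \<Longrightarrow>
      \<sigma> (\<lambda>i. x i + y i) = (\<lambda>i. \<sigma> x i + \<sigma> y i)"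
    and representation_scale: "r \<in> int_ring v \<Longrightarrow> x \<in> Rmod (int_ring v) n \<Longrightarrow>
      \<sigma> (\<lambda>i. r * x i) = (\<lambda>i. r * \<sigma> x i)"
    and representation_bform: "x \<in> Rmod (int_ring v) n \<Longrightarrow> y \<in> Rmod (int_ring v) n \<Longrightarrow>
      bform m G (\<sigma> x) (\<sigma> y) = bform n A x y"
  using assms unfolding representation_def by blast+

definition scalar_gram :: "'a::field \<Rightarrow> nat \<Rightarrow> nat \<Rightarrow> 'a" where
  "scalar_gram c i j = (if i = j then c else 0)"

lemma bform_scalar_gram: "bform n (scalar_gram c) x y = c * (\<Sum>i<n. x i * y i)"
proof -
  have "(\<Sum>j<n. scalar_gram c i j * y j) = c * y i" if "i < n" for i
    using that by (simp add: scalar_gram_def if_distrib[of "\<lambda>z. z * _"] cong: if_cong)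
  then have "bform n (scalar_gram c) x y = (\<Sum>i<n. x i * (c * y i))"
    unfolding bform_eq_sum_right by (intro sum.cong) simp_all
  then show ?thesis by (simp add: sum_distrib_left mult_ac)
qed

definition hyperbolic_gram :: "nat \<Rightarrow> nat \<Rightarrow> nat \<Rightarrow> 'a::field" where
  "hyperbolic_gram n i j = (if i < 2 * n \<and> j < 2 * n \<and> (i = j + n \<or> j = i + n) then 1 else 0)"

lemma bform_hyperbolic_gram:
  "bform (2 * n) (hyperbolic_gram n) x y = (\<Sum>i<n. x i * y (i + n) + x (i + n) * y i)"
proof -
  have row: "(\<Sum>j<2 * n. hyperbolic_gram n i j * y j) = y (if i < n then i + n else i - n)"
    if "i < 2 * n" for i
  proof -
    have "(\<Sum>j<2 * n. hyperbolic_gram n i j * y j) =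
        (\<Sum>j<2 * n. if j = (if i < n then i + n else i - n) then y j else 0)"
      using that by (intro sum.cong) (auto simp: hyperbolic_gram_def)
    also have "\<dots> = y (if i < n then i + n else i - n)"
      using that by auto
    finally show ?thesis .
  qed
  have "bform (2 * n) (hyperbolic_gram n) x y = (\<Sum>i<2 * n. x i * y (if i < n then i + n else i - n))"
    unfolding bform_eq_sum_right by (intro sum.cong) (simp_all add: row)
  then show ?thesis by (simp add: sum_lessThan_double sum.distrib)
qed

definition half_gram :: "(nat \<Rightarrow> nat \<Rightarrow> 'a::field) \<Rightarrow> nat \<Rightarrow> nat \<Rightarrow> 'a" where
  "half_gram A i j = (if i < j then A i j else if i = j then A i i / 2 else 0)"

definition hyperbolic_embedding ::
  "nat \<Rightarrow> (nat \<Rightarrow> nat \<Rightarrow> 'a::field) \<Rightarrow> (nat \<Rightarrow> 'a) \<Rightarrow> nat \<Rightarrow> 'a" where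
  "hyperbolic_embedding n A x = (\<lambda>l. if l < n then x l
     else if l < 2 * n then (\<Sum>j<n. half_gram A j (l - n) * x j) else 0)"

lemma hyperbolic_embedding_add:
  "hyperbolic_embedding n A (\<lambda>i. x i + y i) =
    (\<lambda>i. hyperbolic_embedding n A x i + hyperbolic_embedding n A y i)"
  unfolding hyperbolic_embedding_def by (auto simp: sum.distrib algebra_simps)

lemma hyperbolic_embedding_scale:
  "hyperbolic_embedding n A (\<lambda>i. r * x i) = (\<lambda>i. r * hyperbolic_embedding n A x i)"
  unfolding hyperbolic_embedding_def by (auto simp: sum_distrib_left algebra_simps)

lemma half_gram_symmetrization:
  fixes A :: "nat \<Rightarrow> nat \<Rightarrow> 'a::field"
  shows "(2::'a) \<noteq> 0 \<Longrightarrow> A i j = A j i \<Longrightarrow> A i j = half_gram A i j + half_gram A j i"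
  unfolding half_gram_def by (auto simp: field_simps)

lemma bform_hyperbolic_gram_std_basis:
  assumes "i < n"
  shows "bform (2 * n) (hyperbolic_gram n) x (std_basis (i + n)) = x i"
    and "bform (2 * n) (hyperbolic_gram n) x (std_basis i) = x (i + n)"
  using assms
  by (simp_all add: bform_hyperbolic_gram std_basis_def if_distrib[of "times _"] cong: if_cong)

lemma bform_hyperbolic_embedding:
  fixes A :: "nat \<Rightarrow> nat \<Rightarrow> 'a::field"
  assumes "(2::'a) \<noteq> 0" and sym: "\<And>i j. i < n \<Longrightarrow> j < n \<Longrightarrow> A i j = A j i"
  shows "bform (2 * n) (hyperbolic_gram n) (hyperbolic_embedding n A x) (hyperbolic_embedding n A y)
    = bform n A x y"
proof -
  let ?U = "half_gram A"
  have symmetrization: "A i j = ?U i j + ?U j i" if "i < n" "j < n" for i j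
    using half_gram_symmetrization[of A i j] assms(1) sym[OF that] by simp
  have "bform (2 * n) (hyperbolic_gram n) (hyperbolic_embedding n A x) (hyperbolic_embedding n A y) =
      (\<Sum>i<n. x i * (\<Sum>j<n. ?U j i * y j) + (\<Sum>j<n. ?U j i * x j) * y i)"
    unfolding bform_hyperbolic_gram by (intro sum.cong) (auto simp: hyperbolic_embedding_def)
  also have "\<dots> = (\<Sum>i<n. \<Sum>j<n. x i * ?U j i * y j) + (\<Sum>i<n. \<Sum>j<n. ?U j i * x j * y i)"
    by (simp add: sum.distrib sum_distrib_left sum_distrib_right mult_ac)
  also have "(\<Sum>i<n. \<Sum>j<n. ?U j i * x j * y i) = (\<Sum>i<n. \<Sum>j<n. x i * ?U i j * y j)"
    by (subst sum.swap) (simp add: mult_ac)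
  also have "(\<Sum>i<n. \<Sum>j<n. x i * ?U j i * y j) + (\<Sum>i<n. \<Sum>j<n. x i * ?U i j * y j) =
      (\<Sum>i<n. \<Sum>j<n. x i * A i j * y j)"
    unfolding sum.distrib[symmetric] by (intro sum.cong refl) (simp add: symmetrization algebra_simps)
  finally show ?thesis unfolding bform_def .
qed

section \<open>Discretely valued fields\<close>

definition val_ge :: "('a::field \<Rightarrow> int) \<Rightarrow> int \<Rightarrow> 'a \<Rightarrow> bool" where
  "val_ge v N x \<longleftrightarrow> x = 0 \<or> N \<le> v x"

lemma val_ge_bound_finite:
  assumes "finite K"
  shows "\<exists>d::nat. \<forall>k\<in>K. val_ge v (- int d) (f k)"
proof -
  define d where "d = (\<Sum>k\<in>K. nat (- v (f k)))"
  have "nat (- v (f k)) \<le> d" if "k \<in> K" for k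
    unfolding d_def using assms that by (intro member_le_sum) auto
  then have "\<forall>k\<in>K. val_ge v (- int d) (f k)" unfolding val_ge_def by fastforce
  then show ?thesis ..
qed

locale discrete_valuation_field =
  fixes v :: "'a::field \<Rightarrow> int"
  assumes discrete_valuation: "discrete_valuation v"
begin

lemma v_mult: "x \<noteq> 0 \<Longrightarrow> y \<noteq> 0 \<Longrightarrow> v (x * y) = v x + v y"
  using discrete_valuation unfolding discrete_valuation_def by blast

lemma v_add_ge_min: "x \<noteq> 0 \<Longrightarrow> y \<noteq> 0 \<Longrightarrow> x + y \<noteq> 0 \<Longrightarrow> min (v x) (v y) \<le> v (x + y)"
  using discrete_valuation unfolding discrete_valuation_def by blast

lemma uniformizer_exists: "\<exists>p. p \<noteq> 0 \<and> v p = 1"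
  using discrete_valuation unfolding discrete_valuation_def by blast

lemma v_one [simp]: "v 1 = 0"
  using v_mult[of 1 1] by simp

lemma v_uminus [simp]: "v (- x) = v x"
proof (cases "x = 0")
  case False
  have "v (-1) = 0" using v_mult[of "-1" "-1"] by simp
  then show ?thesis using v_mult[of "-1" x] False by simp
qed simp

lemma v_power: "x \<noteq> 0 \<Longrightarrow> v (x ^ k) = int k * v x"
  by (induction k) (auto simp: v_mult algebra_simps)

lemma val_ge_0 [simp]: "val_ge v N 0"
  by (simp add: val_ge_def)

lemma val_ge_add: "val_ge v N x \<Longrightarrow> val_ge v N y \<Longrightarrow> val_ge v N (x + y)"
  unfolding val_ge_def using v_add_ge_min[of x y] by fastforce

lemma val_ge_uminus: "val_ge v N x \<Longrightarrow> val_ge v N (- x)"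
  by (simp add: val_ge_def)

lemma val_ge_mult: "val_ge v a x \<Longrightarrow> val_ge v b y \<Longrightarrow> val_ge v (a + b) (x * y)"
  unfolding val_ge_def by (cases "x = 0 \<or> y = 0") (auto simp: v_mult)

lemma val_ge_mult_int_ring: "r \<in> int_ring v \<Longrightarrow> val_ge v N x \<Longrightarrow> val_ge v N (r * x)"
  unfolding int_ring_def using val_ge_mult[of 0 r N x] by (auto simp: val_ge_def)

lemma val_ge_mono: "N' \<le> N \<Longrightarrow> val_ge v N x \<Longrightarrow> val_ge v N' x"
  unfolding val_ge_def by auto

lemma val_ge_sum: "(\<And>i. i \<in> A \<Longrightarrow> val_ge v N (f i)) \<Longrightarrow> val_ge v N (sum f A)"
  by (induction A rule: infinite_finite_induct) (auto intro: val_ge_add)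

lemma val_ge_uniformizer_power: "p \<noteq> 0 \<Longrightarrow> v p = 1 \<Longrightarrow> val_ge v (int d) (p ^ d)"
  by (simp add: val_ge_def v_power)

lemma int_ring_iff_val_ge: "x \<in> int_ring v \<longleftrightarrow> val_ge v 0 x"
  unfolding int_ring_def val_ge_def by auto

lemma int_ring_0 [simp]: "0 \<in> int_ring v"
  and int_ring_1 [simp]: "1 \<in> int_ring v"
  by (simp_all add: int_ring_def)

lemma int_ring_add: "x \<in> int_ring v \<Longrightarrow> y \<in> int_ring v \<Longrightarrow> x + y \<in> int_ring v"
  unfolding int_ring_iff_val_ge by (rule val_ge_add)

lemma int_ring_mult: "x \<in> int_ring v \<Longrightarrow> y \<in> int_ring v \<Longrightarrow> x * y \<in> int_ring v"
  unfolding int_ring_iff_val_ge using val_ge_mult[of 0 x 0 y] by simp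

lemma int_ring_uminus: "x \<in> int_ring v \<Longrightarrow> - x \<in> int_ring v"
  unfolding int_ring_iff_val_ge by (rule val_ge_uminus)

lemma int_ring_diff: "x \<in> int_ring v \<Longrightarrow> y \<in> int_ring v \<Longrightarrow> x - y \<in> int_ring v"
  using int_ring_add[OF _ int_ring_uminus] by simp

lemma int_ring_sum: "(\<And>i. i \<in> A \<Longrightarrow> f i \<in> int_ring v) \<Longrightarrow> sum f A \<in> int_ring v"
  unfolding int_ring_iff_val_ge by (rule val_ge_sum)

lemma two_in_int_ring: "2 \<in> int_ring v"
  using int_ring_add[OF int_ring_1 int_ring_1] by simp

lemma Rmod_scale:
  "r \<in> int_ring v \<Longrightarrow> x \<in> Rmod (int_ring v) m \<Longrightarrow> (\<lambda>i. r * x i) \<in> Rmod (int_ring v) m"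
  unfolding Rmod_def by (auto intro: int_ring_mult)

lemma Rmod_lincomb:
  "(\<And>l. l \<in> L \<Longrightarrow> r l \<in> int_ring v) \<Longrightarrow> (\<And>l. l \<in> L \<Longrightarrow> x l \<in> Rmod (int_ring v) m) \<Longrightarrow>
   (\<lambda>i. \<Sum>l\<in>L. r l * x l i) \<in> Rmod (int_ring v) m"
  unfolding Rmod_def by (auto intro!: int_ring_sum int_ring_mult)

lemma std_basis_in_Rmod: "k < m \<Longrightarrow> std_basis k \<in> Rmod (int_ring v) m"
  unfolding Rmod_def std_basis_def by auto

lemma representation_diff:
  assumes rep: "representation v n A m G \<sigma>"
    and x: "x \<in> Rmod (int_ring v) n" and y: "y \<in> Rmod (int_ring v) n"
  shows "\<sigma> (\<lambda>i. x i - y i) = (\<lambda>i. \<sigma> x i - \<sigma> y i)"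
proof -
  have minus_y: "(\<lambda>i. (-1) * y i) \<in> Rmod (int_ring v) n"
    using Rmod_scale[OF int_ring_uminus[OF int_ring_1] y] .
  have "\<sigma> (\<lambda>i. x i + (-1) * y i) = (\<lambda>i. \<sigma> x i + \<sigma> (\<lambda>i. (-1) * y i) i)"
    by (rule representation_add[OF rep x minus_y])
  moreover have "\<sigma> (\<lambda>i. (-1) * y i) = (\<lambda>i. (-1) * \<sigma> y i)"
    by (rule representation_scale[OF rep int_ring_uminus[OF int_ring_1] y])
  ultimately show ?thesis by simp
qed

lemma representation_lincomb:
  assumes rep: "representation v n A m G \<sigma>" and "finite L"
    and "\<And>l. l \<in> L \<Longrightarrow> r l \<in> int_ring v" and "\<And>l. l \<in> L \<Longrightarrow> x l \<in> Rmod (int_ring v) n"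
  shows "\<sigma> (\<lambda>i. \<Sum>l\<in>L. r l * x l i) = (\<lambda>i. \<Sum>l\<in>L. r l * \<sigma> (x l) i)"
  using assms(2-4)
proof (induction L rule: finite_induct)
  case empty
  have "(\<lambda>_. 0) \<in> Rmod (int_ring v) n" by (simp add: Rmod_def)
  then have "\<sigma> (\<lambda>i. 0 * 0) = (\<lambda>i. 0 * \<sigma> (\<lambda>_. 0) i)"
    by (rule representation_scale[OF rep int_ring_0])
  then show ?case by simp
next
  case (insert l L)
  have rx: "(\<lambda>i. r l * x l i) \<in> Rmod (int_ring v) n"
    using insert.prems by (intro Rmod_scale) auto
  have rest: "(\<lambda>i. \<Sum>l\<in>L. r l * x l i) \<in> Rmod (int_ring v) n"
    using insert.prems by (intro Rmod_lincomb) auto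
  have "\<sigma> (\<lambda>i. r l * x l i + (\<Sum>l\<in>L. r l * x l i)) =
      (\<lambda>i. r l * \<sigma> (x l) i + \<sigma> (\<lambda>i. \<Sum>l\<in>L. r l * x l i) i)"
    using representation_add[OF rep rx rest] representation_scale[OF rep] insert.prems by simp
  then show ?case using insert by simp
qed

lemma fixed_vector_zero_if_entries_in_maximal_ideal:
  fixes a :: "nat \<Rightarrow> 'a"
  assumes fixed: "\<And>j. j < n \<Longrightarrow> a j = (\<Sum>k<n. a k * b k j)"
    and small: "\<And>k j. k < n \<Longrightarrow> j < n \<Longrightarrow> val_ge v 1 (b k j)"
    and "j < n"
  shows "a j = 0"
proof (rule ccontr)
  assume "a j \<noteq> 0"
  define S where "S = {k. k < n \<and> a k \<noteq> 0}"
  have "S \<subseteq> {..<n}" "j \<in> S" using \<open>a j \<noteq> 0\<close> \<open>j < n\<close> by (auto simp: S_def)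
  then have S: "finite S" "S \<noteq> {}" using finite_subset[of S "{..<n}"] by auto
  define k0 where "k0 = arg_min_on (\<lambda>k. v (a k)) S"
  have "k0 \<in> S" unfolding k0_def by (rule arg_min_if_finite(1)[OF S])
  then have k0: "k0 < n" "a k0 \<noteq> 0" by (simp_all add: S_def)
  have min: "val_ge v (v (a k0)) (a k)" if "k < n" for k
    using arg_min_least[OF S, of k "\<lambda>k. v (a k)"] that unfolding val_ge_def S_def k0_def by auto
  have "val_ge v (v (a k0) + 1) (\<Sum>k<n. a k * b k k0)"
    using k0 by (intro val_ge_sum val_ge_mult min small) auto
  then have "val_ge v (v (a k0) + 1) (a k0)" by (simp only: fixed[OF k0(1), symmetric])
  then show False using k0 by (simp add: val_ge_def)
qed

end

section \<open>Dual bases of lattices\<close>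

context discrete_valuation_field
begin

lemma exists_scaling_into_int_ring:
  fixes a :: "nat \<Rightarrow> 'a"
  shows "\<exists>t. t \<noteq> 0 \<and> (\<forall>k<m. t * a k \<in> int_ring v)"
proof -
  obtain d :: nat where d: "\<forall>k\<in>{..<m}. val_ge v (- int d) (a k)"
    using val_ge_bound_finite[OF finite_lessThan] by blast
  obtain p where p: "p \<noteq> 0" "v p = 1" using uniformizer_exists by blast
  have "p ^ d * a k \<in> int_ring v" if "k < m" for k
    using val_ge_mult[OF val_ge_uniformizer_power[OF p, of d] d[rule_format, of k]] that
    by (simp add: int_ring_iff_val_ge)
  then show ?thesis using p(1) by (intro exI[of _ "p ^ d"]) auto
qed

context
  fixes m :: nat and G :: "nat \<Rightarrow> nat \<Rightarrow> 'a"
  assumes lattice: "is_lattice v m G"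
begin

lemma lattice_gram_injective:
  assumes "\<And>i. i < m \<Longrightarrow> (\<Sum>k<m. G i k * a k) = 0" and "k < m"
  shows "a k = 0"
proof -
  obtain t where t: "t \<noteq> 0" "\<forall>k<m. t * a k \<in> int_ring v"
    using exists_scaling_into_int_ring by blast
  define x where "x = (\<lambda>k. if k < m then t * a k else 0)"
  have x: "x \<in> Rmod (int_ring v) m" unfolding x_def Rmod_def using t by auto
  have "(\<Sum>i<m. x i * G i j) = 0" if "j < m" for j
  proof -
    have "(\<Sum>i<m. x i * G i j) = t * (\<Sum>i<m. G j i * a i)"
      using lattice that unfolding is_lattice_def sum_distrib_left x_def
      by (intro sum.cong) (auto simp: mult_ac)
    then show ?thesis using assms(1) that by simp
  qed
  then have "\<forall>y. bform m G x y = 0" unfolding bform_eq_sum_left by simp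
  then have "x k = 0" using lattice x unfolding is_lattice_def by blast
  then show "a k = 0" using t(1) \<open>k < m\<close> by (simp add: x_def)
qed

lemma lattice_dual_vector_exists:
  assumes l: "l < m"
  shows "\<exists>w. \<forall>x. bform m G x w = x l"
proof -
  \<comment> \<open>The columns of G together with the l-th basis vector are dependent, and by injectivity
    of G the dependency must involve the basis vector.\<close>
  define u where "u i k = (if k < m then G i k else std_basis l i)" for i k
  obtain a where a: "\<exists>k<Suc m. a k \<noteq> 0" "\<forall>i<m. (\<Sum>k<Suc m. u i k * a k) = 0"
    using homogeneous_system_nontrivial_solution[of m "Suc m" u] by auto
  have expand: "(\<Sum>k<Suc m. u i k * a k) = (\<Sum>k<m. G i k * a k) + a m * std_basis l i" for i
    unfolding u_def by (simp add: mult_ac)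
  have am: "a m \<noteq> 0"
  proof
    assume "a m = 0"
    then have "(\<Sum>k<m. G i k * a k) = 0" if "i < m" for i
      using a(2) expand[of i] that by simp
    then have "a k = 0" if "k < m" for k
      using that by (rule lattice_gram_injective)
    with \<open>a m = 0\<close> show False using a(1) by (auto simp: less_Suc_eq)
  qed
  define w where "w k = - a k / a m" for k
  have "(\<Sum>j<m. G i j * w j) = std_basis l i" if "i < m" for i
  proof -
    have "(\<Sum>j<m. G i j * w j) = - (\<Sum>j<m. G i j * a j) / a m"
      unfolding w_def sum_divide_distrib sum_negf[symmetric] by (intro sum.cong) auto
    also have "(\<Sum>j<m. G i j * a j) = - a m * std_basis l i"
      using a(2) that expand[of i] by (simp add: eq_neg_iff_add_eq_0)
    finally show ?thesis using am by simp
  qed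
  then have "bform m G x w = x l" for x
    using l by (simp add: bform_eq_sum_right)
  then show ?thesis by blast
qed

lemma lattice_dual_basis_bounded:
  "\<exists>W d. (\<forall>l<m. \<forall>x. bform m G x (W l) = x l) \<and> (\<forall>l<m. \<forall>k<m. val_ge v (- int d) (W l k))"
proof -
  have "\<forall>l. \<exists>w. l < m \<longrightarrow> (\<forall>x. bform m G x w = x l)"
    using lattice_dual_vector_exists by blast
  then obtain W where W: "\<forall>l<m. \<forall>x. bform m G x (W l) = x l"
    by metis
  obtain d :: nat where "\<forall>(l, k)\<in>{..<m} \<times> {..<m}. val_ge v (- int d) (W l k)"
    using val_ge_bound_finite[of "{..<m} \<times> {..<m}" v "\<lambda>(l, k). W l k"] by auto
  then have "\<forall>l<m. \<forall>k<m. val_ge v (- int d) (W l k)" by auto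
  with W show ?thesis by blast
qed

end

end

section \<open>Primitive universality of the hyperbolic space\<close>

context discrete_valuation_field
begin

lemma even_lattice_hyperbolic_gram: "even_lattice v (2 * n) (hyperbolic_gram n)"
  unfolding even_lattice_def is_lattice_def
proof (intro conjI ballI allI impI)
  fix i j show "hyperbolic_gram n i j = hyperbolic_gram n j i"
    unfolding hyperbolic_gram_def by auto
next
  fix x y assume "x \<in> Rmod (int_ring v) (2 * n)" "y \<in> Rmod (int_ring v) (2 * n)"
  then show "bform (2 * n) (hyperbolic_gram n) x y \<in> int_ring v"
    unfolding bform_hyperbolic_gram Rmod_def by (auto intro!: int_ring_sum int_ring_add int_ring_mult)
next
  fix x assume "x \<in> Rmod (int_ring v) (2 * n)"
  then have "(\<Sum>i<n. x i * x (i + n)) \<in> int_ring v"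
    unfolding Rmod_def by (auto intro!: int_ring_sum int_ring_mult)
  moreover have "bform (2 * n) (hyperbolic_gram n) x x = 2 * (\<Sum>i<n. x i * x (i + n))"
    unfolding bform_hyperbolic_gram sum_distrib_left by (intro sum.cong) (simp_all add: algebra_simps)
  ultimately show "\<exists>r\<in>int_ring v. bform (2 * n) (hyperbolic_gram n) x x = 2 * r" ..
next
  fix x assume x: "x \<in> Rmod (int_ring v) (2 * n)"
    and orth: "\<forall>y\<in>Rmod (int_ring v) (2 * n). bform (2 * n) (hyperbolic_gram n) x y = 0"
  have coord: "x i = 0" if "i < 2 * n" for i
  proof (cases "i < n")
    case True
    then show ?thesis
      using orth std_basis_in_Rmod[of "i + n"] bform_hyperbolic_gram_std_basis(1)[of i n x] by simp
  next
    case False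
    then have "i - n < n" "i - n + n = i" using that by auto
    then show ?thesis
      using orth std_basis_in_Rmod[of "i - n"] bform_hyperbolic_gram_std_basis(2)[of "i - n" n x]
      by simp
  qed
  show "x = (\<lambda>_. 0)"
  proof
    fix i show "x i = 0"
      using coord x by (cases "i < 2 * n") (auto simp: Rmod_def)
  qed
qed

context
  fixes n :: nat and A :: "nat \<Rightarrow> nat \<Rightarrow> 'a"
  assumes two_nonzero: "(2::'a) \<noteq> 0" and even: "even_lattice v n A"
begin

lemma even_gram_sym: "i < n \<Longrightarrow> j < n \<Longrightarrow> A i j = A j i"
  using even unfolding even_lattice_def is_lattice_def by blast

lemma half_gram_in_int_ring: "i < n \<Longrightarrow> j < n \<Longrightarrow> half_gram A i j \<in> int_ring v"
proof -
  assume ij: "i < n" "j < n"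
  have "A i j \<in> int_ring v"
    using even std_basis_in_Rmod ij bform_std_basis[OF ij, of A]
    unfolding even_lattice_def is_lattice_def by metis
  moreover obtain r where "r \<in> int_ring v" "A i i = 2 * r"
    using even std_basis_in_Rmod[OF ij(1)] bform_std_basis[OF ij(1) ij(1), of A]
    unfolding even_lattice_def by metis
  ultimately show ?thesis using two_nonzero by (auto simp: half_gram_def)
qed

lemma hyperbolic_embedding_in_Rmod:
  "x \<in> Rmod (int_ring v) n \<Longrightarrow> hyperbolic_embedding n A x \<in> Rmod (int_ring v) (2 * n)"
  unfolding Rmod_def hyperbolic_embedding_def
  by (auto intro!: int_ring_sum int_ring_mult half_gram_in_int_ring)

lemma representation_hyperbolic_embedding:
  "representation v n A (2 * n) (hyperbolic_gram n) (hyperbolic_embedding n A)"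
  unfolding representation_def
  using hyperbolic_embedding_in_Rmod bform_hyperbolic_embedding[OF two_nonzero even_gram_sym]
  by (auto simp: hyperbolic_embedding_add hyperbolic_embedding_scale)

lemma prim_represents_hyperbolic_gram: "prim_represents v n A (2 * n) (hyperbolic_gram n)"
  unfolding prim_represents_def
proof (intro exI conjI)
  let ?\<sigma> = "hyperbolic_embedding n A"
  show "representation v n A (2 * n) (hyperbolic_gram n) ?\<sigma>"
    by (rule representation_hyperbolic_embedding)
  define N where "N = {z \<in> Rmod (int_ring v) (2 * n). \<forall>l<n. z l = 0}"
  show "direct_summand (int_ring v) (?\<sigma> ` Rmod (int_ring v) n) (Rmod (int_ring v) (2 * n))"
    unfolding direct_summand_def
  proof (intro exI conjI ballI)
    show "submodule_of (int_ring v) N (Rmod (int_ring v) (2 * n))"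
      unfolding submodule_of_def N_def Rmod_def by (auto intro: int_ring_add int_ring_mult)
  next
    fix z assume z: "z \<in> Rmod (int_ring v) (2 * n)"
    define x where "x = (\<lambda>l. if l < n then z l else 0)"
    have x: "x \<in> Rmod (int_ring v) n" using z unfolding x_def Rmod_def by auto
    have "(\<lambda>i. z i - ?\<sigma> x i) \<in> Rmod (int_ring v) (2 * n)"
      using z hyperbolic_embedding_in_Rmod[OF x] unfolding Rmod_def by (auto intro: int_ring_diff)
    moreover have "\<forall>l<n. z l - ?\<sigma> x l = 0" by (simp add: x_def hyperbolic_embedding_def)
    ultimately have "(\<lambda>i. z i - ?\<sigma> x i) \<in> N" unfolding N_def by blast
    then show "\<exists>u\<in>?\<sigma> ` Rmod (int_ring v) n. \<exists>w\<in>N. z = (\<lambda>i. u i + w i)"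
      using x by (intro bexI[of _ "?\<sigma> x"] bexI[of _ "\<lambda>i. z i - ?\<sigma> x i"]) auto
  next
    have zero: "?\<sigma> (\<lambda>_. 0) = (\<lambda>_. 0)" "(\<lambda>_. 0) \<in> Rmod (int_ring v) n" "(\<lambda>_. 0) \<in> N"
      unfolding N_def Rmod_def hyperbolic_embedding_def by auto
    have "x = (\<lambda>_. 0)" if "x \<in> Rmod (int_ring v) n" "\<forall>l<n. ?\<sigma> x l = 0" for x
    proof
      fix l show "x l = 0"
        using that by (cases "l < n") (auto simp: Rmod_def hyperbolic_embedding_def)
    qed
    then have "?\<sigma> ` Rmod (int_ring v) n \<inter> N \<subseteq> {\<lambda>_. 0}"
      using zero(1) unfolding N_def by auto
    moreover have "(\<lambda>_. 0) \<in> ?\<sigma> ` Rmod (int_ring v) n"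
      using zero(1,2) by (metis image_eqI)
    ultimately show "?\<sigma> ` Rmod (int_ring v) n \<inter> N = {\<lambda>_. 0}"
      using zero(3) by blast
  qed
qed

end

end

section \<open>The rank bound\<close>

context discrete_valuation_field
begin

lemma representation_cancel_mod_complement:
  assumes rep: "representation v n A m G \<sigma>"
    and trivial: "\<sigma> ` Rmod (int_ring v) n \<inter> N = {\<lambda>_. 0}"
    and inj: "\<And>x. x \<in> Rmod (int_ring v) n \<Longrightarrow> \<sigma> x = (\<lambda>_. 0) \<Longrightarrow> x = (\<lambda>_. 0)"
    and x: "x \<in> Rmod (int_ring v) n" and y: "y \<in> Rmod (int_ring v) n"
    and diff: "(\<lambda>i. \<sigma> x i - \<sigma> y i) \<in> N"
  shows "x = y"
proof -
  have xy: "(\<lambda>i. x i - y i) \<in> Rmod (int_ring v) n"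
    using x y unfolding Rmod_def by (auto intro: int_ring_diff)
  then have "\<sigma> (\<lambda>i. x i - y i) \<in> \<sigma> ` Rmod (int_ring v) n" by (rule imageI)
  moreover have "\<sigma> (\<lambda>i. x i - y i) \<in> N" using diff representation_diff[OF rep x y] by simp
  ultimately have "\<sigma> (\<lambda>i. x i - y i) = (\<lambda>_. 0)" using trivial by blast
  then have "(\<lambda>i. x i - y i) = (\<lambda>_. 0)" by (rule inj[OF xy])
  then show "x = y" by (simp add: fun_eq_iff)
qed

lemma primitive_representation_dual:
  assumes rep: "representation v n A m G \<sigma>"
    and summand: "direct_summand (int_ring v) (\<sigma> ` Rmod (int_ring v) n) (Rmod (int_ring v) m)"
    and inj: "\<And>x. x \<in> Rmod (int_ring v) n \<Longrightarrow> \<sigma> x = (\<lambda>_. 0) \<Longrightarrow> x = (\<lambda>_. 0)"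
  shows "\<exists>\<alpha>. (\<forall>j. \<forall>l<m. \<alpha> j l \<in> int_ring v) \<and>
    (\<forall>k<n. \<forall>j. (\<Sum>l<m. \<sigma> (std_basis k) l * \<alpha> j l) = std_basis k j)"
proof -
  let ?Rn = "Rmod (int_ring v) n" and ?Rm = "Rmod (int_ring v) m"
  from summand obtain N where N: "submodule_of (int_ring v) N ?Rm"
    and decomp: "\<forall>z\<in>?Rm. \<exists>u\<in>\<sigma> ` ?Rn. \<exists>w\<in>N. z = (\<lambda>i. u i + w i)"
    and trivial: "\<sigma> ` ?Rn \<inter> N = {\<lambda>_. 0}"
    unfolding direct_summand_def by blast
  have "\<exists>x. l < m \<longrightarrow> x \<in> ?Rn \<and> (\<lambda>i. std_basis l i - \<sigma> x i) \<in> N" for l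
  proof (cases "l < m")
    case True
    then obtain x w where "x \<in> ?Rn" "w \<in> N" "std_basis l = (\<lambda>i. \<sigma> x i + w i)"
      using decomp std_basis_in_Rmod by blast
    then show ?thesis by (intro exI[of _ x]) simp
  qed simp
  then obtain P where P: "\<And>l. l < m \<Longrightarrow> P l \<in> ?Rn"
    and P_complement: "\<And>l. l < m \<Longrightarrow> (\<lambda>i. std_basis l i - \<sigma> (P l) i) \<in> N"
    by metis
  \<comment> \<open>Expanding \<sigma>(e_k) in the standard basis and projecting along N gives back e_k.\<close>
  have "std_basis k = (\<lambda>i. \<Sum>l<m. \<sigma> (std_basis k) l * P l i)" if k: "k < n" for k
  proof -
    let ?s = "\<sigma> (std_basis k)" and ?y = "\<lambda>i. \<Sum>l<m. \<sigma> (std_basis k) l * P l i"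
    have s: "?s \<in> ?Rm" by (rule representation_in_Rmod[OF rep std_basis_in_Rmod[OF k]])
    have y: "?y \<in> ?Rn" using s P by (intro Rmod_lincomb) (auto simp: Rmod_def)
    have "(\<lambda>i. \<Sum>l<m. ?s l * (std_basis l i - \<sigma> (P l) i)) \<in> N"
      using s P_complement by (intro submodule_lincomb[OF N]) (auto simp: Rmod_def)
    moreover have "(\<lambda>i. \<Sum>l<m. ?s l * (std_basis l i - \<sigma> (P l) i)) = (\<lambda>i. ?s i - \<sigma> ?y i)"
    proof -
      have \<sigma>y: "\<sigma> ?y = (\<lambda>i. \<Sum>l<m. ?s l * \<sigma> (P l) i)"
        using s P by (intro representation_lincomb[OF rep]) (auto simp: Rmod_def)
      have expansion: "(\<Sum>l<m. ?s l * std_basis l i) = ?s i" for i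
        using s by (intro std_basis_expansion) (simp add: Rmod_def)
      show ?thesis by (simp add: right_diff_distrib sum_subtractf expansion \<sigma>y)
    qed
    ultimately have "(\<lambda>i. ?s i - \<sigma> ?y i) \<in> N" by simp
    then show ?thesis
      using representation_cancel_mod_complement[OF rep trivial _ std_basis_in_Rmod[OF k] y] inj
      by blast
  qed
  then show ?thesis
    using P unfolding Rmod_def by (intro exI[of _ "\<lambda>j l. P l j"]) (auto simp: fun_eq_iff)
qed

lemma rank_ge_of_nearly_hyperbolic_gram:
  fixes s w :: "nat \<Rightarrow> nat \<Rightarrow> 'a"
  assumes ss: "\<And>i k. i < n \<Longrightarrow> k < n \<Longrightarrow> bform m G (s i) (s k) = (if i = k then c else 0)"
    and sw: "\<And>i k. i < n \<Longrightarrow> k < n \<Longrightarrow> bform m G (s i) (w k) = (if i = k then 1 else 0)"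
    and ww: "\<And>i k. i < n \<Longrightarrow> k < n \<Longrightarrow> val_ge v (- int d) (bform m G (w i) (w k))"
    and c: "val_ge v (int d + 1) c"
  shows "2 * n \<le> m"
proof (rule ccontr)
  assume "\<not> 2 * n \<le> m"
  define V where "V k = (if k < n then s k else w (k - n))" for k
  obtain a where a: "\<exists>k<2 * n. a k \<noteq> 0" "\<forall>t<m. (\<Sum>k<2 * n. V k t * a k) = 0"
    using homogeneous_system_nontrivial_solution[of m "2 * n" "\<lambda>t k. V k t"] \<open>\<not> 2 * n \<le> m\<close>
    by auto
  define X where "X t = (\<Sum>k<2 * n. a k * V k t)" for t
  have "X t = 0" if "t < m" for t
    using a(2) that unfolding X_def by (simp add: mult.commute)
  then have X: "bform m G z X = 0" "bform m G X z = 0" for z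
    using bform_cong[of m z z X "\<lambda>_. 0" G] bform_cong[of m X "\<lambda>_. 0" z z G] by simp_all
  \<comment> \<open>Pairing the dependency with s j and with w j shows that its first half is a vector fixed
    by the matrix (c B(w k, w j)), whose entries lie in the maximal ideal.\<close>
  have upper: "a (j + n) = - c * a j" if j: "j < n" for j
  proof -
    have "0 = bform m G (s j) X" using X by simp
    also have "\<dots> = (\<Sum>k<n. a k * bform m G (s j) (s k)) + (\<Sum>k<n. a (k + n) * bform m G (s j) (w k))"
      unfolding X_def bform_sum_right by (simp add: sum_lessThan_double V_def)
    also have "\<dots> = a j * c + a (j + n)"
      using ss[OF j] sw[OF j] j by (simp add: if_distrib[of "times _"] cong: if_cong)
    finally show ?thesis by (simp add: algebra_simps eq_neg_iff_add_eq_0)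
  qed
  have lower: "a j = (\<Sum>k<n. a k * (c * bform m G (w k) (w j)))" if j: "j < n" for j
  proof -
    have "0 = bform m G X (w j)" using X by simp
    also have "\<dots> = (\<Sum>k<n. a k * bform m G (s k) (w j)) + (\<Sum>k<n. a (k + n) * bform m G (w k) (w j))"
      unfolding X_def bform_sum_left by (simp add: sum_lessThan_double V_def)
    also have "\<dots> = a j - (\<Sum>k<n. a k * (c * bform m G (w k) (w j)))"
      using sw j upper by (simp add: if_distrib[of "times _"] sum_negf mult_ac cong: if_cong)
    finally show ?thesis by simp
  qed
  have small: "val_ge v 1 (c * bform m G (w k) (w j))" if "k < n" "j < n" for k j
    using val_ge_mult[OF c ww[OF that]] by simp
  have first_half: "a j = 0" if "j < n" for j
    using fixed_vector_zero_if_entries_in_maximal_ideal[OF lower small that] by simp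
  have "a k = 0" if "k < 2 * n" for k
  proof (cases "k < n")
    case False
    then have "k - n < n" "(k - n) + n = k" using that by auto
    then show ?thesis using upper[of "k - n"] first_half[of "k - n"] by simp
  qed (rule first_half)
  with a(1) show False by blast
qed

lemma even_lattice_scalar_gram:
  assumes two: "(2::'a) \<noteq> 0" and r: "r \<in> int_ring v" "r \<noteq> 0"
  shows "even_lattice v n (scalar_gram (2 * r))"
  unfolding even_lattice_def is_lattice_def bform_scalar_gram
proof (intro conjI ballI allI impI)
  fix i j show "scalar_gram (2 * r) i j = scalar_gram (2 * r) j i"
    by (simp add: scalar_gram_def)
next
  fix x y assume "x \<in> Rmod (int_ring v) n" "y \<in> Rmod (int_ring v) n"
  then show "2 * r * (\<Sum>i<n. x i * y i) \<in> int_ring v"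
    using r(1) two_in_int_ring unfolding Rmod_def by (auto intro!: int_ring_mult int_ring_sum)
next
  fix x assume "x \<in> Rmod (int_ring v) n"
  then have "r * (\<Sum>i<n. x i * x i) \<in> int_ring v"
    using r(1) unfolding Rmod_def by (auto intro!: int_ring_mult int_ring_sum)
  then show "\<exists>r'\<in>int_ring v. 2 * r * (\<Sum>i<n. x i * x i) = 2 * r'"
    by (intro bexI[of _ "r * (\<Sum>i<n. x i * x i)"]) simp_all
next
  fix x assume x: "x \<in> Rmod (int_ring v) n"
    and orth: "\<forall>y\<in>Rmod (int_ring v) n. 2 * r * (\<Sum>i<n. x i * y i) = 0"
  show "x = (\<lambda>_. 0)"
  proof
    fix i show "x i = 0"
    proof (cases "i < n")
      case True
      have "2 * r * (\<Sum>t<n. x t * std_basis i t) = 0" using orth std_basis_in_Rmod[OF True] by blast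
      then have "2 * r * x i = 0" using True by simp
      then show ?thesis using two r(2) by simp
    qed (use x in \<open>simp add: Rmod_def\<close>)
  qed
qed

lemma rank_ge_of_prim_represents_scalar_gram:
  assumes W: "\<And>l x. l < m \<Longrightarrow> bform m G x (W l) = x l"
    and W_bound: "\<And>l k. l < m \<Longrightarrow> k < m \<Longrightarrow> val_ge v (- int d) (W l k)"
    and c: "c \<noteq> 0" "val_ge v (int d + 1) c"
    and prim: "prim_represents v n (scalar_gram c) m G"
  shows "2 * n \<le> m"
proof -
  obtain \<sigma> where rep: "representation v n (scalar_gram c) m G \<sigma>"
    and summand: "direct_summand (int_ring v) (\<sigma> ` Rmod (int_ring v) n) (Rmod (int_ring v) m)"
    using prim unfolding prim_represents_def by blast
  have form: "bform m G (\<sigma> x) (\<sigma> y) = c * (\<Sum>i<n. x i * y i)"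
    if "x \<in> Rmod (int_ring v) n" "y \<in> Rmod (int_ring v) n" for x y
    using representation_bform[OF rep that] by (simp add: bform_scalar_gram)
  have inj: "x = (\<lambda>_. 0)" if x: "x \<in> Rmod (int_ring v) n" and "\<sigma> x = (\<lambda>_. 0)" for x
  proof
    fix i show "x i = 0"
    proof (cases "i < n")
      case True
      have "c * x i = bform m G (\<sigma> x) (\<sigma> (std_basis i))"
        using form[OF x std_basis_in_Rmod[OF True]] True by simp
      also have "\<dots> = 0" using \<open>\<sigma> x = (\<lambda>_. 0)\<close> by simp
      finally show ?thesis using c(1) by simp
    qed (use x in \<open>simp add: Rmod_def\<close>)
  qed
  obtain \<alpha> where \<alpha>_int: "\<forall>j. \<forall>l<m. \<alpha> j l \<in> int_ring v"
    and \<alpha>_dual: "\<forall>k<n. \<forall>j. (\<Sum>l<m. \<sigma> (std_basis k) l * \<alpha> j l) = std_basis k j"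
    using primitive_representation_dual[OF rep summand inj] by blast
  define w where "w j = (\<lambda>t. \<Sum>l<m. \<alpha> j l * W l t)" for j
  have bform_w: "bform m G x (w j) = (\<Sum>l<m. \<alpha> j l * x l)" for x j
    unfolding w_def bform_sum_right using W by simp
  show ?thesis
  proof (rule rank_ge_of_nearly_hyperbolic_gram[where s = "\<lambda>k. \<sigma> (std_basis k)" and w = w])
    fix i k assume "i < n" "k < n"
    then have "bform m G (\<sigma> (std_basis i)) (\<sigma> (std_basis k)) = c * std_basis k i"
      using form[OF std_basis_in_Rmod std_basis_in_Rmod] by simp
    then show "bform m G (\<sigma> (std_basis i)) (\<sigma> (std_basis k)) = (if i = k then c else 0)"
      by (auto simp: std_basis_def)
    show "bform m G (\<sigma> (std_basis i)) (w k) = (if i = k then 1 else 0)"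
      using \<alpha>_dual \<open>i < n\<close> by (simp add: bform_w mult.commute std_basis_def)
    have "val_ge v (- int d) (w i l)" if "l < m" for l
      unfolding w_def using \<alpha>_int W_bound that by (intro val_ge_sum val_ge_mult_int_ring) auto
    then show "val_ge v (- int d) (bform m G (w i) (w k))"
      unfolding bform_w using \<alpha>_int by (intro val_ge_sum val_ge_mult_int_ring) auto
  qed (rule c(2))
qed

lemma rank_ge_of_prim_universal_even:
  assumes two: "(2::'a) \<noteq> 0" and even: "even_lattice v m G"
    and universal: "prim_universal_even v n m G"
  shows "2 * n \<le> m"
proof -
  have "is_lattice v m G" using even by (simp add: even_lattice_def)
  then obtain W d where W: "\<forall>l<m. \<forall>x. bform m G x (W l) = x l"
    and W_bound: "\<forall>l<m. \<forall>k<m. val_ge v (- int d) (W l k)"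
    using lattice_dual_basis_bounded by blast
  obtain p where p: "p \<noteq> 0" "v p = 1" using uniformizer_exists by blast
  \<comment> \<open>The exponent d + 1 beats the denominators of the dual basis; the factor 2 makes the form even.\<close>
  define r where "r = p ^ (d + 1)"
  have r_val: "val_ge v (int d + 1) r"
    using val_ge_uniformizer_power[OF p, of "d + 1"] by (simp add: r_def add.commute)
  then have r: "r \<in> int_ring v" "r \<noteq> 0"
    using p(1) val_ge_mono[of 0 "int d + 1" r] by (simp_all add: r_def int_ring_iff_val_ge)
  have "prim_represents v n (scalar_gram (2 * r)) m G"
    using universal even_lattice_scalar_gram[OF two r] by (simp add: prim_universal_even_def)
  moreover have "val_ge v (int d + 1) (2 * r)"
    by (rule val_ge_mult_int_ring[OF two_in_int_ring r_val])
  moreover have "2 * r \<noteq> 0" using two r(2) by simp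
  ultimately show ?thesis
    using W W_bound by (intro rank_ge_of_prim_represents_scalar_gram[of m G W d "2 * r"]) auto
qed

end

theorem mainTheorem4:
  fixes v :: "'a::field \<Rightarrow> int" and n :: nat
  assumes "nonarch_local_field v"
    and "(2::'a) \<noteq> 0"
    and "prime_elem_in (int_ring v) 2"
    and "0 < n"
  shows "(\<exists>G. even_lattice v (2 * n) G \<and> prim_universal_even v n (2 * n) G) \<and>
         (\<forall>m G. even_lattice v m G \<and> prim_universal_even v n m G \<longrightarrow> 2 * n \<le> m)"
proof -
  interpret discrete_valuation_field v
    using assms(1) by unfold_locales (simp add: nonarch_local_field_def)
  have "prim_universal_even v n (2 * n) (hyperbolic_gram n)"
    using prim_represents_hyperbolic_gram[OF assms(2)] by (simp add: prim_universal_even_def)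
  then show ?thesis
    using even_lattice_hyperbolic_gram rank_ge_of_prim_universal_even[OF assms(2)] by blast
qed

end
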